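(* For a finite graph $G$, let $M(G)$ be the maximum number of distinct subsets of $V(G)$ such that any two distinct subsets in the family are neighbors. Let $K_{m,n}$ be the complete bipartite graph with parts of sizes $m$ and $n$. Then $$M(K_{m,n})=(2^m-1)(2^n-1)+2.$$ More generally, if $K_{n_1,\dots,n_r}$ is the complete multipartite graph with disjoint parts (maximal stable sets) of cardinalities $n_1,\dots,n_r$, then $$M(K_{n_1,\dots,n_r})=2^{\sum_{i=1}^r n_i}-\sum_{i=1}^r 2^{n_i}+2r-1.$$
   Context: Two subsets $A,B$ of the vertex set of a graph $G$ are called neighbors if there exist $a\in A$ and $b\in B$ such that $a$ and $b$ are adjacent in $G$. (A subset may or may not be its own neighbor.) *)

theory Defs
  imports Main
begin

text \<open>A finite graph is given by a vertex set V and a symmetric irreflexive adjacency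
relation E. Two vertex subsets A, B are neighbors if some a in A is adjacent to some b in B.\<close>

definition neighbors :: "('a \<Rightarrow> 'a \<Rightarrow> bool) \<Rightarrow> 'a set \<Rightarrow> 'a set \<Rightarrow> bool" where
  "neighbors E A B \<longleftrightarrow> (\<exists>a\<in>A. \<exists>b\<in>B. E a b)"

definition nbr_family :: "'a set \<Rightarrow> ('a \<Rightarrow> 'a \<Rightarrow> bool) \<Rightarrow> 'a set set \<Rightarrow> bool" where
  "nbr_family V E F \<longleftrightarrow> F \<subseteq> Pow V \<and> (\<forall>A\<in>F. \<forall>B\<in>F. A \<noteq> B \<longrightarrow> neighbors E A B)"

definition M :: "'a set \<Rightarrow> ('a \<Rightarrow> 'a \<Rightarrow> bool) \<Rightarrow> nat" where
  "M V E = Max (card ` {F. nbr_family V E F})"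

text \<open>Complete multipartite graph with parts of sizes ns!0, ..., ns!(r-1):
  vertex (i,j) is the j-th vertex of part i; two vertices are adjacent iff in different parts.\<close>
definition cmp_V :: "nat list \<Rightarrow> (nat \<times> nat) set" where
  "cmp_V ns = {(i, j). i < length ns \<and> j < ns ! i}"

definition cmp_E :: "nat list \<Rightarrow> (nat \<times> nat) \<Rightarrow> (nat \<times> nat) \<Rightarrow> bool" where
  "cmp_E ns x y \<longleftrightarrow> x \<in> cmp_V ns \<and> y \<in> cmp_V ns \<and> fst x \<noteq> fst y"

definition cbp_V :: "nat \<Rightarrow> nat \<Rightarrow> (nat \<times> nat) set" where
  "cbp_V m n = cmp_V [m, n]"

definition cbp_E :: "nat \<Rightarrow> nat \<Rightarrow> (nat \<times> nat) \<Rightarrow> (nat \<times> nat) \<Rightarrow> bool" where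
  "cbp_E m n = cmp_E [m, n]"

end

theory Submission
  imports Defs
begin

text \<open>A complete multipartite graph is described by a finite vertex set V together with a map p
  assigning each vertex its part; two vertices are adjacent iff they lie in different parts.
  Call a subset of V confined if it lies inside a single part (the empty set included).
  Two confined sets inside the same part are never neighbors, so a neighbor family contains
  at most one confined set per part. Any non-confined set is a neighbor
  of every nonempty set, so all non-confined sets together with one singleton from each part
  form an optimal family. Hence M = 2^|V| - #confined + #parts, and counting the confined sets
  part by part gives the formula.\<close>

definition confined :: "('a \<Rightarrow> 'b) \<Rightarrow> 'a set \<Rightarrow> 'a set set" where
  "confined p V = {A \<in> Pow V. \<exists>q\<in>p ` V. A \<subseteq> {x \<in> V. p x = q}}"

lemma neighbors_sym:
  assumes "\<And>x y. E x y \<Longrightarrow> E y x" and "neighbors E A B"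
  shows "neighbors E B A"
  using assms unfolding neighbors_def by blast

lemma neighbors_if_not_confined:
  assumes E: "\<And>x y. E x y \<longleftrightarrow> x \<in> V \<and> y \<in> V \<and> p x \<noteq> p y"
    and A: "A \<in> Pow V - confined p V" and "B \<subseteq> V" and "B \<noteq> {}"
  shows "neighbors E A B"
proof -
  obtain b where b: "b \<in> B" using \<open>B \<noteq> {}\<close> by blast
  with \<open>B \<subseteq> V\<close> have "b \<in> V" by blast
  with A obtain a where "a \<in> A" "p a \<noteq> p b"
    unfolding confined_def by blast
  with A b \<open>b \<in> V\<close> show ?thesis
    unfolding neighbors_def E by blast
qed

lemma card_confined_in_nbr_family_le:
  assumes "finite V"
    and E: "\<And>x y. E x y \<longleftrightarrow> x \<in> V \<and> y \<in> V \<and> p x \<noteq> p y"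
    and F: "nbr_family V E F"
  shows "card (F \<inter> confined p V) \<le> card (p ` V)"
proof -
  define part where "part A = (SOME q. q \<in> p ` V \<and> A \<subseteq> {x \<in> V. p x = q})" for A
  have part: "part A \<in> p ` V \<and> A \<subseteq> {x \<in> V. p x = part A}" if "A \<in> confined p V" for A
    unfolding part_def by (rule someI_ex) (use that in \<open>auto simp: confined_def\<close>)
  have "inj_on part (F \<inter> confined p V)"
  proof (rule inj_onI, rule ccontr)
    fix A B assume A: "A \<in> F \<inter> confined p V" and B: "B \<in> F \<inter> confined p V"
      and same: "part A = part B" and "A \<noteq> B"
    then have "neighbors E A B" using F unfolding nbr_family_def by blast
    then obtain a b where ab: "a \<in> A" "b \<in> B" "p a \<noteq> p b"
      unfolding neighbors_def E by blast
    have "p a = part A"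
      using part A ab(1) by blast
    moreover have "p b = part B"
      using part B ab(2) by blast
    ultimately show False
      using same ab(3) by simp
  qed
  then show ?thesis
    by (rule card_inj_on_le) (use part \<open>finite V\<close> in auto)
qed

lemma card_nbr_family_le:
  assumes "finite V"
    and E: "\<And>x y. E x y \<longleftrightarrow> x \<in> V \<and> y \<in> V \<and> p x \<noteq> p y"
    and F: "nbr_family V E F"
  shows "card F \<le> card (Pow V - confined p V) + card (p ` V)"
proof -
  have "F = (F \<inter> confined p V) \<union> (F \<inter> (Pow V - confined p V))"
    using F unfolding nbr_family_def by blast
  then have "card F \<le> card (F \<inter> confined p V) + card (F \<inter> (Pow V - confined p V))"
    by (metis card_Un_le)
  also have "card (F \<inter> (Pow V - confined p V)) \<le> card (Pow V - confined p V)"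
    by (rule card_mono) (use \<open>finite V\<close> in auto)
  finally show ?thesis
    using card_confined_in_nbr_family_le[OF \<open>finite V\<close> E F] by linarith
qed

lemma optimal_nbr_family:
  assumes "finite V"
    and E: "\<And>x y. E x y \<longleftrightarrow> x \<in> V \<and> y \<in> V \<and> p x \<noteq> p y"
  defines "W \<equiv> (Pow V - confined p V) \<union> (\<lambda>q. {inv_into V p q}) ` p ` V"
  shows "nbr_family V E W" and "card W = card (Pow V - confined p V) + card (p ` V)"
proof -
  have rep: "inv_into V p q \<in> V" "p (inv_into V p q) = q" if "q \<in> p ` V" for q
    using that by (auto intro: inv_into_into f_inv_into_f)
  have E_sym: "E x y \<Longrightarrow> E y x" for x y
    by (auto simp: E)
  have spread_nbr: "neighbors E A B" "neighbors E B A"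
    if "A \<in> Pow V - confined p V" "B \<subseteq> V" "B \<noteq> {}" for A B
    using neighbors_if_not_confined[OF E that] neighbors_sym[of E, OF E_sym]
    by blast+
  have "neighbors E A B" if A: "A \<in> W" and B: "B \<in> W" and "A \<noteq> B" for A B
  proof -
    consider "A \<in> Pow V - confined p V" "B \<in> Pow V - confined p V"
      | q where "q \<in> p ` V" "A \<in> Pow V - confined p V" "B = {inv_into V p q}"
      | q where "q \<in> p ` V" "A = {inv_into V p q}" "B \<in> Pow V - confined p V"
      | q q' where "q \<in> p ` V" "q' \<in> p ` V" "A = {inv_into V p q}" "B = {inv_into V p q'}"
      using A B unfolding W_def by blast
    then show ?thesis
    proof cases
      case 1
      show ?thesis
      proof (cases "B = {}")
        case True
        with 1 \<open>A \<noteq> B\<close> show ?thesis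
          using spread_nbr(2)[of B A] by blast
      next
        case False
        with 1 show ?thesis
          using spread_nbr(1)[of A B] by blast
      qed
    next
      case 2
      then show ?thesis
        using spread_nbr(1)[of A B] rep by blast
    next
      case 3
      then show ?thesis
        using spread_nbr(2)[of B A] rep by blast
    next
      case 4
      with \<open>A \<noteq> B\<close> rep show ?thesis
        unfolding neighbors_def E by auto
    qed
  qed
  moreover have "W \<subseteq> Pow V"
    unfolding W_def using rep by blast
  ultimately show "nbr_family V E W"
    unfolding nbr_family_def by blast
  have reps_confined: "{inv_into V p q} \<in> confined p V" if "q \<in> p ` V" for q
    using rep[OF that] that unfolding confined_def by auto
  have "inj_on (\<lambda>q. {inv_into V p q}) (p ` V)"
    by (rule inj_onI) (metis rep(2) singleton_inject)
  then have "card ((\<lambda>q. {inv_into V p q}) ` p ` V) = card (p ` V)"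
    by (rule card_image)
  moreover have "(Pow V - confined p V) \<inter> (\<lambda>q. {inv_into V p q}) ` p ` V = {}"
    using reps_confined by blast
  ultimately show "card W = card (Pow V - confined p V) + card (p ` V)"
    unfolding W_def using \<open>finite V\<close> by (simp add: card_Un_disjoint)
qed

theorem M_complete_multipartite:
  assumes "finite V"
    and E: "\<And>x y. E x y \<longleftrightarrow> x \<in> V \<and> y \<in> V \<and> p x \<noteq> p y"
  shows "M V E = card (Pow V - confined p V) + card (p ` V)"
proof -
  have "finite {F. nbr_family V E F}"
    by (rule finite_subset[of _ "Pow (Pow V)"]) (use \<open>finite V\<close> in \<open>auto simp: nbr_family_def\<close>)
  then have "finite (card ` {F. nbr_family V E F})"
    by (rule finite_imageI)
  then show ?thesis
    unfolding M_def
  proof (rule Max_eqI)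
    fix k
    assume "k \<in> card ` {F. nbr_family V E F}"
    then obtain F where "nbr_family V E F" and "k = card F"
      by blast
    then show "k \<le> card (Pow V - confined p V) + card (p ` V)"
      using card_nbr_family_le[OF \<open>finite V\<close> E] by simp
  next
    obtain W where "nbr_family V E W" and "card W = card (Pow V - confined p V) + card (p ` V)"
      using optimal_nbr_family[OF \<open>finite V\<close> E] by blast
    then show "card (Pow V - confined p V) + card (p ` V) \<in> card ` {F. nbr_family V E F}"
      by (intro rev_image_eqI[of W]) simp_all
  qed
qed

lemma card_confined:
  assumes "finite V" and "V \<noteq> {}"
  shows "card (confined p V) = 1 + (\<Sum>q\<in>p ` V. 2 ^ card {x \<in> V. p x = q} - 1)"
proof -
  let ?C = "\<Union>q\<in>p ` V. Pow {x \<in> V. p x = q} - {{}}"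
  have confined_eq: "confined p V = insert {} ?C"
    using \<open>V \<noteq> {}\<close> unfolding confined_def by auto
  have "(Pow {x \<in> V. p x = q} - {{}}) \<inter> (Pow {x \<in> V. p x = q'} - {{}}) = {}"
    if "q \<noteq> q'" for q q'
    using that by fastforce
  then have "card ?C = (\<Sum>q\<in>p ` V. card (Pow {x \<in> V. p x = q} - {{}}))"
    using \<open>finite V\<close> by (intro card_UN_disjoint) auto
  also have "\<dots> = (\<Sum>q\<in>p ` V. 2 ^ card {x \<in> V. p x = q} - 1)"
    using \<open>finite V\<close> by (intro sum.cong) (simp_all add: card_Pow)
  finally have card_C: "card ?C = (\<Sum>q\<in>p ` V. 2 ^ card {x \<in> V. p x = q} - 1)" .
  have "finite ?C" "{} \<notin> ?C"
    using \<open>finite V\<close> by auto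
  then show ?thesis
    unfolding confined_eq card_insert_disjoint[OF \<open>finite ?C\<close> \<open>{} \<notin> ?C\<close>] card_C
    by simp
qed

corollary M_complete_multipartite_count:
  assumes "finite V" and "V \<noteq> {}"
    and E: "\<And>x y. E x y \<longleftrightarrow> x \<in> V \<and> y \<in> V \<and> p x \<noteq> p y"
  shows "int (M V E) = 2 ^ card V - (\<Sum>q\<in>p ` V. 2 ^ card {x \<in> V. p x = q})
                        + 2 * int (card (p ` V)) - 1"
proof -
  have "confined p V \<subseteq> Pow V"
    unfolding confined_def by blast
  moreover have "card (confined p V) \<le> card (Pow V)"
    using \<open>finite V\<close> \<open>confined p V \<subseteq> Pow V\<close> by (simp add: card_mono)
  ultimately have "int (card (Pow V - confined p V)) = 2 ^ card V - int (card (confined p V))"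
    using \<open>finite V\<close> by (simp add: card_Diff_subset card_Pow finite_subset)
  moreover have "int (\<Sum>q\<in>p ` V. 2 ^ card {x \<in> V. p x = q} - 1)
      = (\<Sum>q\<in>p ` V. 2 ^ card {x \<in> V. p x = q}) - int (card (p ` V))"
    by (simp add: sum_subtractf)
  ultimately show ?thesis
    using M_complete_multipartite[OF \<open>finite V\<close> E] card_confined[OF assms(1,2), of p]
    by simp
qed

lemma cmp_V_eq_UN: "cmp_V ns = (\<Union>i<length ns. Pair i ` {..<ns ! i})"
  unfolding cmp_V_def by auto

lemma finite_cmp_V: "finite (cmp_V ns)"
  unfolding cmp_V_eq_UN by blast

lemma card_cmp_V_part: "i < length ns \<Longrightarrow> card {x \<in> cmp_V ns. fst x = i} = ns ! i"
proof -
  assume "i < length ns"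
  then have "{x \<in> cmp_V ns. fst x = i} = Pair i ` {..<ns ! i}"
    unfolding cmp_V_def by auto
  then show ?thesis
    by (simp add: card_image inj_on_def)
qed

lemma card_cmp_V: "card (cmp_V ns) = sum_list ns"
proof -
  have "card (cmp_V ns) = (\<Sum>i<length ns. card (Pair i ` {..<ns ! i}))"
    unfolding cmp_V_eq_UN by (rule card_UN_disjoint) auto
  also have "\<dots> = sum_list ns"
    by (simp add: card_image inj_on_def sum_list_sum_nth atLeast0LessThan)
  finally show ?thesis .
qed

lemma fst_image_cmp_V:
  assumes "\<forall>k\<in>set ns. 1 \<le> k"
  shows "fst ` cmp_V ns = {..<length ns}"
proof -
  have "(i, 0) \<in> cmp_V ns" if "i < length ns" for i
    using assms that nth_mem by (fastforce simp: cmp_V_def)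
  then show ?thesis
    by (force simp: cmp_V_def)
qed

theorem M_cmp:
  assumes "ns \<noteq> []" and pos: "\<forall>k\<in>set ns. 1 \<le> k"
  shows "int (M (cmp_V ns) (cmp_E ns))
    = 2 ^ sum_list ns - (\<Sum>k\<leftarrow>ns. 2 ^ k) + 2 * int (length ns) - 1"
proof -
  have parts: "fst ` cmp_V ns = {..<length ns}"
    using fst_image_cmp_V[OF pos] .
  then have "cmp_V ns \<noteq> {}"
    using \<open>ns \<noteq> []\<close> by auto
  then have "int (M (cmp_V ns) (cmp_E ns))
      = 2 ^ card (cmp_V ns) - (\<Sum>i\<in>fst ` cmp_V ns. 2 ^ card {x \<in> cmp_V ns. fst x = i})
        + 2 * int (card (fst ` cmp_V ns)) - 1"
    by (rule M_complete_multipartite_count[OF finite_cmp_V]) (simp add: cmp_E_def)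
  also have "(\<Sum>i\<in>fst ` cmp_V ns. (2::int) ^ card {x \<in> cmp_V ns. fst x = i})
      = (\<Sum>k\<leftarrow>ns. 2 ^ k)"
    by (simp add: parts card_cmp_V_part sum_list_sum_nth atLeast0LessThan)
  finally show ?thesis
    by (simp add: parts card_cmp_V)
qed

theorem proposition1:
  shows "(\<forall>m n::nat. 1 \<le> m \<longrightarrow> 1 \<le> n \<longrightarrow>
            int (M (cbp_V m n) (cbp_E m n)) = (2 ^ m - 1) * (2 ^ n - 1) + 2)
       \<and> (\<forall>ns::nat list. ns \<noteq> [] \<longrightarrow> (\<forall>k\<in>set ns. 1 \<le> k) \<longrightarrow>
            int (M (cmp_V ns) (cmp_E ns))
              = 2 ^ (sum_list ns) - (\<Sum>k\<leftarrow>ns. 2 ^ k) + 2 * int (length ns) - 1)"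
proof (intro conjI allI impI)
  fix m n :: nat
  assume "1 \<le> m" "1 \<le> n"
  then have "int (M (cmp_V [m, n]) (cmp_E [m, n])) = 2 ^ (m + n) - (2 ^ m + 2 ^ n) + 2 * 2 - 1"
    using M_cmp[of "[m, n]"] by simp
  then show "int (M (cbp_V m n) (cbp_E m n)) = (2 ^ m - 1) * (2 ^ n - 1) + 2"
    by (simp add: cbp_V_def cbp_E_def power_add algebra_simps)
qed (fact M_cmp)

end
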